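(* Let $M$ be a nonzero $\mathscr{D}(R,V)$-module. Either $\mathrm{Ann}_R(M) = (0)$ or $\mathrm{Ann}_R(M) = \pi^\ell R$ for some $\ell \geq 1$.
   Context: Let $(V, \pi V, k)$ be a DVR of mixed characteristic $(0,p)$ (i.e. $V$ has characteristic zero, maximal ideal generated by $\pi$, and residue field $k$ of characteristic $p>0$), and let $R$ be either $V[[x_1, \ldots, x_n]]$ or $V[x_1, \ldots, x_n]$ for some $n \geq 0$. $\mathscr{D}(R,V)$ denotes the ring of $V$-linear differential operators on $R$, and $\mathscr{D}(R,V)$-modules are left modules over it. *)

theory Defs
  imports Main "HOL-Library.Poly_Mapping"
begin

text \<open>Formal power series (and polynomials) in the variables x_0, ..., x_{n-1}
  over a coefficient ring 'v are encoded as coefficient functions on monomials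
  (exponent vectors, i.e. finitely supported nat-valued functions).\<close>

type_synonym 'v ser = "(nat \<Rightarrow>\<^sub>0 nat) \<Rightarrow> 'v"

definition PS :: "nat \<Rightarrow> ('v::zero) ser set" where
  "PS n = {f. \<forall>a. f a \<noteq> 0 \<longrightarrow> Poly_Mapping.keys a \<subseteq> {..<n}}"

definition MPolys :: "nat \<Rightarrow> ('v::zero) ser set" where
  "MPolys n = {f \<in> PS n. finite {a. f a \<noteq> 0}}"

definition ser_zero :: "('v::zero) ser" where
  "ser_zero = (\<lambda>_. 0)"

definition ser_add :: "('v::plus) ser \<Rightarrow> 'v ser \<Rightarrow> 'v ser" where
  "ser_add f g = (\<lambda>a. f a + g a)"

definition ser_mult :: "('v::comm_semiring_1) ser \<Rightarrow> 'v ser \<Rightarrow> 'v ser" where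
  "ser_mult f g = (\<lambda>a. \<Sum>(b, c)\<in>{(b, c). b + c = a}. f b * g c)"

definition ser_const :: "('v::zero) \<Rightarrow> 'v ser" where
  "ser_const c = (\<lambda>a. if a = 0 then c else 0)"

definition ser_smult :: "('v::times) \<Rightarrow> 'v ser \<Rightarrow> 'v ser" where
  "ser_smult c f = (\<lambda>a. c * f a)"

text \<open>Operators on R are functions on the coefficient-function type that vanish
  outside the carrier R (so that equality of operators is equality on R).\<close>

definition mult_op :: "('v::comm_semiring_1) ser set \<Rightarrow> 'v ser \<Rightarrow> ('v ser \<Rightarrow> 'v ser)" where
  "mult_op R r = (\<lambda>f. if f \<in> R then ser_mult r f else ser_zero)"

definition V_linear :: "('v::comm_semiring_1) ser set \<Rightarrow> ('v ser \<Rightarrow> 'v ser) \<Rightarrow> bool" where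
  "V_linear R \<delta> \<longleftrightarrow> \<delta> ` R \<subseteq> R
     \<and> (\<forall>f. f \<notin> R \<longrightarrow> \<delta> f = ser_zero)
     \<and> (\<forall>f\<in>R. \<forall>g\<in>R. \<delta> (ser_add f g) = ser_add (\<delta> f) (\<delta> g))
     \<and> (\<forall>c. \<forall>f\<in>R. \<delta> (ser_smult c f) = ser_smult c (\<delta> f))"

definition commutator :: "('v::comm_ring_1) ser set \<Rightarrow> ('v ser \<Rightarrow> 'v ser) \<Rightarrow> 'v ser \<Rightarrow> ('v ser \<Rightarrow> 'v ser)" where
  "commutator R \<delta> r = (\<lambda>f. if f \<in> R then (\<lambda>a. \<delta> (ser_mult r f) a - ser_mult r (\<delta> f) a) else ser_zero)"

fun diffops :: "('v::comm_ring_1) ser set \<Rightarrow> nat \<Rightarrow> ('v ser \<Rightarrow> 'v ser) set" where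
  "diffops R 0 = {mult_op R r | r. r \<in> R}"
| "diffops R (Suc m) = {\<delta>. V_linear R \<delta> \<and> (\<forall>r\<in>R. commutator R \<delta> r \<in> diffops R m)}"

definition DiffOps :: "('v::comm_ring_1) ser set \<Rightarrow> ('v ser \<Rightarrow> 'v ser) set" where
  "DiffOps R = (\<Union>m. diffops R m)"

definition D_module :: "('v::comm_ring_1) ser set \<Rightarrow> (('v ser \<Rightarrow> 'v ser) \<Rightarrow> 'm::ab_group_add \<Rightarrow> 'm) \<Rightarrow> bool" where
  "D_module R act \<longleftrightarrow>
     (\<forall>\<delta>\<in>DiffOps R. \<forall>x y. act \<delta> (x + y) = act \<delta> x + act \<delta> y)
   \<and> (\<forall>\<delta>\<in>DiffOps R. \<forall>\<delta>'\<in>DiffOps R. \<forall>x. act (\<lambda>f. ser_add (\<delta> f) (\<delta>' f)) x = act \<delta> x + act \<delta>' x)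
   \<and> (\<forall>\<delta>\<in>DiffOps R. \<forall>\<delta>'\<in>DiffOps R. \<forall>x. act (\<delta> \<circ> \<delta>') x = act \<delta> (act \<delta>' x))
   \<and> (\<forall>x. act (mult_op R (ser_const 1)) x = x)"

definition Ann_R :: "('v::comm_ring_1) ser set \<Rightarrow> (('v ser \<Rightarrow> 'v ser) \<Rightarrow> 'm::ab_group_add \<Rightarrow> 'm) \<Rightarrow> 'v ser set" where
  "Ann_R R act = {r \<in> R. \<forall>x. act (mult_op R r) x = 0}"

definition mixed_char_DVR :: "('v::idom) \<Rightarrow> bool" where
  "mixed_char_DVR \<pi> \<longleftrightarrow> \<pi> \<noteq> 0 \<and> \<not> \<pi> dvd 1
     \<and> (\<forall>x. x \<noteq> 0 \<longrightarrow> (\<exists>u k. u dvd 1 \<and> x = u * \<pi> ^ k))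
     \<and> (\<forall>n::nat. of_nat n = (0::'v) \<longrightarrow> n = 0)
     \<and> (\<exists>p::nat. p > 0 \<and> \<pi> dvd of_nat p)"

end

theory Submission
  imports Defs "HOL-Computational_Algebra.Formal_Power_Series"
begin

(* The annihilator J of M is an ideal of R that is stable under the Hasse derivatives
   D_i^(k) = (1/k!) (d/dx_i)^k: by the Leibniz rule D_i^(k) r = sum_j D_i^(j)(r) D_i^(k-j) as
   operators on R, so if r kills M, induction on k shows that D_i^(k)(r) kills M.
   The composite D^(a) of the D_i^(a_i) moves the coefficient f_a of f to the constant term.
   For a polynomial f and a of maximal total degree, D^(a) f is the constant f_a; removing
   that term and inducting on the support puts every coefficient of f into J.  For a power
   series take f_a of minimal valuation: then D^(a) f = f_a q with q(0) = 1, so q is a unit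
   of R and again f_a lies in J.  Hence J is generated by the ideal of constants in J, an
   ideal of the DVR V, which is (0) or (pi^l); here l >= 1 because M is nonzero. *)

section \<open>Formal power series as coefficient functions\<close>

type_synonym monomial = "nat \<Rightarrow>\<^sub>0 nat"

abbreviation keys where "keys \<equiv> Poly_Mapping.keys"
abbreviation lookup where "lookup \<equiv> Poly_Mapping.lookup"
abbreviation single where "single \<equiv> Poly_Mapping.single"

definition antidiagonal :: "monomial \<Rightarrow> (monomial \<times> monomial) set" where
  "antidiagonal a = {(b, c). b + c = a}"

lemma mem_antidiagonal [simp]: "p \<in> antidiagonal a \<longleftrightarrow> fst p + snd p = a"
  by (cases p) (simp add: antidiagonal_def)

lemma finite_antidiagonal: "finite (antidiagonal a)"
proof -
  define M where "M = (\<Sum>i\<in>keys a. lookup a i)"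
  define S :: "(nat \<Rightarrow> nat) set" where
    "S = {f. \<forall>x. (x \<in> keys a \<longrightarrow> f x \<in> {..M}) \<and> (x \<notin> keys a \<longrightarrow> f x = 0)}"
  have "finite S" unfolding S_def by (rule finite_set_of_finite_funs) auto
  then have "finite {b. lookup b \<in> S}"
    using finite_vimageI[of S lookup] by (simp add: vimage_def inj_def poly_mapping_eqI)
  moreover have "fst ` antidiagonal a \<subseteq> {b. lookup b \<in> S}"
  proof
    fix b assume "b \<in> fst ` antidiagonal a"
    then obtain c where bc: "b + c = a" by auto
    have "lookup b x \<le> lookup a x" for x using bc by (auto simp: lookup_add)
    moreover have "lookup a x \<le> M" if "x \<in> keys a" for x
      unfolding M_def using that by (intro member_le_sum) auto
    ultimately show "b \<in> {b. lookup b \<in> S}"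
      unfolding S_def by (simp add: in_keys_iff) (metis le_zero_eq order_trans)
  qed
  ultimately have "finite (fst ` antidiagonal a)" by (rule finite_subset[rotated])
  moreover have "antidiagonal a \<subseteq> (\<lambda>b. (b, a - b)) ` fst ` antidiagonal a"
  proof
    fix p assume p: "p \<in> antidiagonal a"
    then have "p = (fst p, a - fst p)" by (cases p) auto
    with p show "p \<in> (\<lambda>b. (b, a - b)) ` fst ` antidiagonal a" by blast
  qed
  ultimately show ?thesis by (meson finite_imageI finite_subset)
qed

lemma monomial_add_eq_0_iff: "b + c = (0 :: monomial) \<longleftrightarrow> b = 0 \<and> c = 0"
proof
  assume "b + c = 0"
  then have "lookup b x + lookup c x = 0" for x
    by (metis lookup_add lookup_zero)
  then show "b = 0 \<and> c = 0"
    by (auto intro!: poly_mapping_eqI)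
qed simp

lemma antidiagonal_0: "antidiagonal 0 = {(0, 0)}"
  by (auto simp: monomial_add_eq_0_iff)

lemma ser_mult_eq_sum_antidiagonal: "ser_mult f g a = (\<Sum>p\<in>antidiagonal a. f (fst p) * g (snd p))"
  by (simp add: ser_mult_def antidiagonal_def split_def)

lemma ser_mult_commute: "ser_mult f g = ser_mult (g :: 'v::comm_semiring_1 ser) f"
  unfolding ser_mult_eq_sum_antidiagonal
  by (intro ext sum.reindex_bij_witness[where i=prod.swap and j=prod.swap])
     (auto simp: add.commute mult.commute)

lemma ser_mult_assoc: "ser_mult (ser_mult f g) h = ser_mult f (ser_mult g (h :: 'v::comm_semiring_1 ser))"
proof
  fix a
  have "ser_mult (ser_mult f g) h a
      = (\<Sum>pq\<in>Sigma (antidiagonal a) (\<lambda>p. antidiagonal (fst p)). f (fst (snd pq)) * g (snd (snd pq)) * h (snd (fst pq)))"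
    by (simp add: ser_mult_eq_sum_antidiagonal sum_distrib_right sum.Sigma finite_antidiagonal split_def)
  also have "\<dots> = (\<Sum>pq\<in>Sigma (antidiagonal a) (\<lambda>p. antidiagonal (snd p)). f (fst (fst pq)) * (g (fst (snd pq)) * h (snd (snd pq))))"
    by (rule sum.reindex_bij_witness[where
          i="\<lambda>((d, b), (e, c)). ((d + e, c), (d, e))" and j="\<lambda>((b, c), (d, e)). ((d, e + c), (e, c))"])
       (auto simp: add.assoc mult.assoc)
  also have "\<dots> = ser_mult f (ser_mult g h) a"
    by (simp add: ser_mult_eq_sum_antidiagonal sum_distrib_left sum.Sigma finite_antidiagonal split_def)
  finally show "ser_mult (ser_mult f g) h a = ser_mult f (ser_mult g h) a" .
qed

lemma ser_mult_left_commute: "ser_mult f (ser_mult g h) = ser_mult g (ser_mult f (h :: 'v::comm_semiring_1 ser))"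
  by (metis ser_mult_assoc ser_mult_commute)

lemma ser_mult_const_left: "ser_mult (ser_const c) f = ser_smult (c :: 'v::comm_semiring_1) f"
proof
  fix a
  have "ser_mult (ser_const c) f a = (\<Sum>p\<in>antidiagonal a. if p = (0, a) then c * f a else 0)"
    unfolding ser_mult_eq_sum_antidiagonal
    by (rule sum.cong) (auto simp: ser_const_def)
  then show "ser_mult (ser_const c) f a = ser_smult c f a"
    by (simp add: finite_antidiagonal ser_smult_def)
qed

lemma ser_mult_const_right: "ser_mult f (ser_const c) = ser_smult (c :: 'v::comm_semiring_1) f"
  by (metis ser_mult_commute ser_mult_const_left)

lemma ser_smult_const: "ser_smult d (ser_const c) = ser_const (d * (c :: 'v::comm_semiring_1))"
  by (auto simp: ser_smult_def ser_const_def)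

lemma ser_zero_eq_const: "ser_zero = ser_const 0"
  by (auto simp: ser_zero_def ser_const_def)

lemma ser_mult_add_right:
  "ser_mult r (ser_add f g) = ser_add (ser_mult r f) (ser_mult (r :: 'v::comm_semiring_1 ser) g)"
  by (rule ext) (simp add: ser_mult_eq_sum_antidiagonal ser_add_def distrib_left sum.distrib)

lemma ser_mult_add_left:
  "ser_mult (ser_add f g) r = ser_add (ser_mult f r) (ser_mult g (r :: 'v::comm_semiring_1 ser))"
  by (metis ser_mult_add_right ser_mult_commute)

lemma ser_mult_diff_right:
  "ser_mult r (\<lambda>a. f a - g a) = (\<lambda>a. ser_mult r f a - ser_mult (r :: 'v::comm_ring_1 ser) g a)"
  by (rule ext) (simp add: ser_mult_eq_sum_antidiagonal right_diff_distrib sum_subtractf)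

lemma ser_mult_smult_right: "ser_mult r (ser_smult c f) = ser_smult c (ser_mult r (f :: 'v::comm_semiring_1 ser))"
  by (rule ext) (simp add: ser_mult_eq_sum_antidiagonal ser_smult_def sum_distrib_left mult.left_commute)

lemma ser_mult_nonzero_coeff:
  assumes "ser_mult f g a \<noteq> 0"
  obtains b c where "b + c = a" "f b \<noteq> 0" "g c \<noteq> 0"
proof -
  obtain p where "p \<in> antidiagonal a" "f (fst p) * g (snd p) \<noteq> 0"
    using assms sum.not_neutral_contains_not_neutral unfolding ser_mult_eq_sum_antidiagonal by blast
  then show ?thesis
    using that[of "fst p" "snd p"] by (metis mem_antidiagonal mult_zero_left mult_zero_right)
qed

lemma ser_mult_zero_left [simp]: "ser_mult ser_zero f = (ser_zero :: 'v::comm_semiring_1 ser)"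
  by (rule ext) (simp add: ser_mult_eq_sum_antidiagonal ser_zero_def)

lemma ser_mult_zero_right [simp]: "ser_mult f ser_zero = (ser_zero :: 'v::comm_semiring_1 ser)"
  by (rule ext) (simp add: ser_mult_eq_sum_antidiagonal ser_zero_def)

lemma ser_zero_apply [simp]: "ser_zero a = 0"
  by (simp add: ser_zero_def)

lemma ser_add_zero_left [simp]: "ser_add ser_zero f = (f :: 'v::monoid_add ser)"
  by (simp add: ser_add_def ser_zero_def)

lemma ser_smult_1 [simp]: "ser_smult 1 f = (f :: 'v::monoid_mult ser)"
  by (simp add: ser_smult_def)

definition total_degree :: "monomial \<Rightarrow> nat" where
  "total_degree a = (\<Sum>i\<in>keys a. lookup a i)"

lemma total_degree_eq_sum: "finite K \<Longrightarrow> keys a \<subseteq> K \<Longrightarrow> total_degree a = (\<Sum>i\<in>K. lookup a i)"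
  unfolding total_degree_def by (rule sum.mono_neutral_left) (auto simp: in_keys_iff)

lemma total_degree_add: "total_degree (a + b) = total_degree a + total_degree b"
proof -
  have "finite (keys a \<union> keys b)" "keys (a + b) \<subseteq> keys a \<union> keys b"
    by (simp_all add: keys_add)
  then show ?thesis
    by (simp add: total_degree_eq_sum[of "keys a \<union> keys b"] lookup_add sum.distrib)
qed

lemma total_degree_eq_0_iff: "total_degree a = 0 \<longleftrightarrow> a = 0"
  by (auto simp: total_degree_def in_keys_iff intro!: poly_mapping_eqI)

text \<open>If \<open>g 0 = 1\<close>, the coefficients of \<open>1/g\<close> are determined recursively from \<open>g * (1/g) = 1\<close>;
  the recursion terminates because the total degree of \<open>snd p\<close> drops.\<close>

function ser_inverse :: "'v::comm_ring_1 ser \<Rightarrow> monomial \<Rightarrow> 'v" where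
  "ser_inverse g a = (if a = 0 then 1
     else - (\<Sum>p\<in>{p \<in> antidiagonal a. fst p \<noteq> 0}. g (fst p) * ser_inverse g (snd p)))"
  by auto
termination
proof (relation "measure (\<lambda>(g, a). total_degree a)")
  fix g :: "'v ser" and a p
  assume "p \<in> {p \<in> antidiagonal a. fst p \<noteq> 0}"
  then have "a = fst p + snd p" "fst p \<noteq> 0" by auto
  then have "total_degree a = total_degree (fst p) + total_degree (snd p)" "total_degree (fst p) \<noteq> 0"
    by (simp_all add: total_degree_add total_degree_eq_0_iff)
  then show "((g, snd p), g, a) \<in> measure (\<lambda>(g, a). total_degree a)" by simp
qed simp

declare ser_inverse.simps [simp del]

lemma ser_mult_ser_inverse:
  assumes "g 0 = 1"
  shows "ser_mult g (ser_inverse g) = ser_const 1"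
proof
  fix a
  show "ser_mult g (ser_inverse g) a = ser_const 1 a"
  proof (cases "a = 0")
    case True
    then show ?thesis
      using assms by (simp add: ser_mult_eq_sum_antidiagonal antidiagonal_0 ser_const_def ser_inverse.simps)
  next
    case False
    have split: "antidiagonal a = insert (0, a) {p \<in> antidiagonal a. fst p \<noteq> 0}" by auto
    have fin: "finite {p \<in> antidiagonal a. fst p \<noteq> 0}"
      using finite_antidiagonal[of a] by (rule finite_subset[rotated]) blast
    have "ser_mult g (ser_inverse g) a
        = g 0 * ser_inverse g a + (\<Sum>p\<in>{p \<in> antidiagonal a. fst p \<noteq> 0}. g (fst p) * ser_inverse g (snd p))"
      unfolding ser_mult_eq_sum_antidiagonal by (subst split, subst sum.insert[OF fin]) auto
    also have "\<dots> = 0"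
      using False assms by (subst ser_inverse.simps) simp
    finally show ?thesis
      using False by (simp add: ser_const_def)
  qed
qed

lemma ser_inverse_PS:
  assumes "g \<in> PS n"
  shows "ser_inverse g \<in> PS n"
proof -
  have "keys a \<subseteq> {..<n}" if "g \<in> PS n" "ser_inverse g a \<noteq> 0" for g a
    using that
  proof (induction g a rule: ser_inverse.induct)
    case (1 g a)
    show ?case
    proof (cases "a = 0")
      case False
      then have "(\<Sum>p\<in>{p \<in> antidiagonal a. fst p \<noteq> 0}. g (fst p) * ser_inverse g (snd p)) \<noteq> 0"
        using "1.prems"(2) by (subst (asm) ser_inverse.simps) simp
      then obtain p where p: "p \<in> {p \<in> antidiagonal a. fst p \<noteq> 0}" "g (fst p) * ser_inverse g (snd p) \<noteq> 0"
        by (rule sum.not_neutral_contains_not_neutral)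
      then have "g (fst p) \<noteq> 0" "ser_inverse g (snd p) \<noteq> 0" by auto
      then have "keys (fst p) \<subseteq> {..<n}" "keys (snd p) \<subseteq> {..<n}"
        using "1.prems"(1) "1.IH"[OF False p(1) "1.prems"(1)] by (simp_all add: PS_def)
      then show ?thesis
        using p(1) keys_add[of "fst p" "snd p"] by auto
    qed simp
  qed
  then show ?thesis
    using assms unfolding PS_def by blast
qed

section \<open>Hasse derivatives\<close>

text \<open>The Hasse derivative \<open>D_i^(k) = (1/k!) (\<partial>/\<partial>x_i)^k\<close>, which is defined over \<open>V\<close>
  without dividing by \<open>k!\<close>.\<close>

definition hasse_deriv :: "nat \<Rightarrow> nat \<Rightarrow> 'v::comm_semiring_1 ser \<Rightarrow> 'v ser" where
  "hasse_deriv i k f = (\<lambda>c. of_nat ((lookup c i + k) choose k) * f (c + single i k))"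

lemma hasse_deriv_0 [simp]: "hasse_deriv i 0 f = f"
  by (simp add: hasse_deriv_def)

lemma hasse_deriv_add: "hasse_deriv i k (ser_add f g) = ser_add (hasse_deriv i k f) (hasse_deriv i k g)"
  by (rule ext) (simp add: hasse_deriv_def ser_add_def distrib_left)

lemma hasse_deriv_smult: "hasse_deriv i k (ser_smult c f) = ser_smult c (hasse_deriv i k f)"
  by (rule ext) (simp add: hasse_deriv_def ser_smult_def mult.left_commute)

lemma add_single_minus_single [simp]: "(a + single i j) - single i j = (a :: monomial)"
  by (rule poly_mapping_eqI) (simp add: lookup_add lookup_minus)

lemma minus_single_add_single: "j \<le> lookup a i \<Longrightarrow> (a - single i j) + single i j = (a :: monomial)"
  by (rule poly_mapping_eqI) (auto simp: lookup_add lookup_minus lookup_single when_def)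

lemma hasse_deriv_ser_zero [simp]: "hasse_deriv i k ser_zero = ser_zero"
  by (rule ext) (simp add: hasse_deriv_def ser_zero_def)

lemma keys_minus_single_lookup: "keys (a - single i (lookup a i)) = keys a - {i}"
  by (auto simp: in_keys_iff lookup_minus lookup_single when_def split: if_splits)

lemma keys_subset_keys_add: "keys c \<subseteq> keys (c + d :: monomial)"
  by (auto simp: in_keys_iff lookup_add)

lemma hasse_deriv_at_monomial: "hasse_deriv i (lookup a i) f (a - single i (lookup a i)) = f a"
  by (simp add: hasse_deriv_def lookup_minus minus_single_add_single)

lemma sum_antidiagonal_shift:
  assumes "j \<le> k"
  shows "(\<Sum>p\<in>antidiagonal c. G (fst p + single i j) (snd p + single i (k - j)))
       = (\<Sum>p\<in>{p \<in> antidiagonal (c + single i k). j \<le> lookup (fst p) i \<and> k - j \<le> lookup (snd p) i}.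
            G (fst p) (snd p))"
proof (rule sum.reindex_bij_witness[where i="\<lambda>p. (fst p - single i j, snd p - single i (k - j))"
      and j="\<lambda>p. (fst p + single i j, snd p + single i (k - j))"])
  fix p assume "p \<in> antidiagonal c"
  have "(fst p + single i j) + (snd p + single i (k - j)) = (fst p + snd p) + (single i j + single i (k - j))"
    by (simp add: ac_simps)
  also have "\<dots> = c + single i k"
    using \<open>p \<in> antidiagonal c\<close> assms by (simp flip: single_add)
  finally show "(fst p + single i j, snd p + single i (k - j))
      \<in> {p \<in> antidiagonal (c + single i k). j \<le> lookup (fst p) i \<and> k - j \<le> lookup (snd p) i}"
    by (simp add: lookup_add)
next
  fix p assume p: "p \<in> {p \<in> antidiagonal (c + single i k). j \<le> lookup (fst p) i \<and> k - j \<le> lookup (snd p) i}"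
  then have "fst p - single i j + single i j = fst p" "snd p - single i (k - j) + single i (k - j) = snd p"
    by (simp_all add: minus_single_add_single)
  then show "(fst (fst p - single i j, snd p - single i (k - j)) + single i j,
        snd (fst p - single i j, snd p - single i (k - j)) + single i (k - j)) = p"
    by simp
  have "(fst p - single i j) + (snd p - single i (k - j)) = c"
  proof (rule poly_mapping_eqI)
    fix x
    have "lookup (fst p + snd p) x = lookup (c + single i k) x"
      using p by simp
    then have "lookup (fst p) x + lookup (snd p) x = lookup c x + (if x = i then k else 0)"
      by (simp add: lookup_add lookup_single)
    then show "lookup ((fst p - single i j) + (snd p - single i (k - j))) x = lookup c x"
      using p assms by (simp add: lookup_add lookup_minus lookup_single split: if_splits)
  qed
  then show "(fst p - single i j, snd p - single i (k - j)) \<in> antidiagonal c"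
    by simp
qed simp_all

lemma ser_mult_hasse_deriv_eq_sum:
  assumes "j \<le> k"
  shows "ser_mult (hasse_deriv i j r) (hasse_deriv i (k - j) f) c
       = (\<Sum>p\<in>antidiagonal (c + single i k).
            of_nat ((lookup (fst p) i choose j) * (lookup (snd p) i choose (k - j))) * (r (fst p) * f (snd p)))"
    (is "_ = (\<Sum>p\<in>?A. ?H p)")
proof -
  let ?Q = "{p \<in> ?A. j \<le> lookup (fst p) i \<and> k - j \<le> lookup (snd p) i}"
  have "ser_mult (hasse_deriv i j r) (hasse_deriv i (k - j) f) c
      = (\<Sum>p\<in>antidiagonal c. ?H (fst p + single i j, snd p + single i (k - j)))"
    unfolding ser_mult_eq_sum_antidiagonal hasse_deriv_def
    by (intro sum.cong) (simp_all add: lookup_add ac_simps)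
  also have "\<dots> = (\<Sum>p\<in>?Q. ?H p)"
    using sum_antidiagonal_shift[OF assms, of "\<lambda>u v. ?H (u, v)"] by simp
  also have "\<dots> = (\<Sum>p\<in>?A. ?H p)"
  proof (rule sum.mono_neutral_left)
    show "\<forall>p\<in>?A - ?Q. ?H p = 0"
    proof
      fix p assume "p \<in> ?A - ?Q"
      then have "lookup (fst p) i < j \<or> lookup (snd p) i < k - j" by auto
      then show "?H p = 0" by (auto simp: binomial_eq_0)
    qed
  qed (auto simp: finite_antidiagonal)
  finally show ?thesis .
qed

text \<open>The binomial factors combine by Vandermonde's identity.\<close>

lemma hasse_deriv_ser_mult:
  "hasse_deriv i k (ser_mult r f) c = (\<Sum>j\<le>k. ser_mult (hasse_deriv i j r) (hasse_deriv i (k - j) f) c)"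
proof -
  have vandermonde: "(\<Sum>j\<le>k. of_nat (lookup (fst p) i choose j) * of_nat (lookup (snd p) i choose (k - j)))
      = (of_nat ((lookup c i + k) choose k) :: 'a)" if "p \<in> antidiagonal (c + single i k)" for p
  proof -
    have "lookup (fst p + snd p) i = lookup (c + single i k) i"
      using that by simp
    then have "lookup (fst p) i + lookup (snd p) i = lookup c i + k"
      by (simp add: lookup_add)
    then have "(\<Sum>j\<le>k. (lookup (fst p) i choose j) * (lookup (snd p) i choose (k - j))) = (lookup c i + k) choose k"
      using binomial_Vandermonde[of "lookup (fst p) i" "lookup (snd p) i" k] by (simp add: atLeast0AtMost)
    then show ?thesis
      unfolding of_nat_mult[symmetric] of_nat_sum[symmetric] by simp
  qed
  have "(\<Sum>j\<le>k. ser_mult (hasse_deriv i j r) (hasse_deriv i (k - j) f) c)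
      = (\<Sum>p\<in>antidiagonal (c + single i k). \<Sum>j\<le>k.
           of_nat ((lookup (fst p) i choose j) * (lookup (snd p) i choose (k - j))) * (r (fst p) * f (snd p)))"
    by (simp add: ser_mult_hasse_deriv_eq_sum sum.swap[of _ "{..k}"])
  also have "\<dots> = (\<Sum>p\<in>antidiagonal (c + single i k). of_nat ((lookup c i + k) choose k) * (r (fst p) * f (snd p)))"
    by (intro sum.cong) (simp_all add: vandermonde flip: sum_distrib_right)
  also have "\<dots> = hasse_deriv i k (ser_mult r f) c"
    by (simp add: hasse_deriv_def ser_mult_eq_sum_antidiagonal sum_distrib_left)
  finally show ?thesis by simp
qed

definition hasse_subring :: "'v::comm_ring_1 ser set \<Rightarrow> bool" where
  "hasse_subring R \<longleftrightarrow> (\<forall>c. ser_const c \<in> R)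
     \<and> (\<forall>f\<in>R. \<forall>g\<in>R. ser_add f g \<in> R \<and> ser_mult f g \<in> R)
     \<and> (\<forall>i k. \<forall>f\<in>R. hasse_deriv i k f \<in> R)"

lemma hasse_subring_PS: "hasse_subring (PS n :: 'v::comm_ring_1 ser set)"
  unfolding hasse_subring_def
proof (intro conjI allI ballI)
  fix c :: 'v
  show "ser_const c \<in> PS n" by (simp add: PS_def ser_const_def)
next
  fix f g :: "'v ser" assume f: "f \<in> PS n" and g: "g \<in> PS n"
  show "ser_add f g \<in> PS n"
    unfolding PS_def
  proof (intro CollectI allI impI)
    fix a assume "ser_add f g a \<noteq> 0"
    then have "f a \<noteq> 0 \<or> g a \<noteq> 0" by (auto simp: ser_add_def)
    then show "keys a \<subseteq> {..<n}"
      using f g unfolding PS_def by blast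
  qed
  show "ser_mult f g \<in> PS n"
    unfolding PS_def
  proof (intro CollectI allI impI)
    fix a assume "ser_mult f g a \<noteq> 0"
    then obtain b c where "b + c = a" "f b \<noteq> 0" "g c \<noteq> 0" by (rule ser_mult_nonzero_coeff)
    moreover from this have "keys b \<subseteq> {..<n}" "keys c \<subseteq> {..<n}"
      using f g unfolding PS_def by blast+
    ultimately show "keys a \<subseteq> {..<n}"
      using keys_add[of b c] by blast
  qed
next
  fix i k and f :: "'v ser" assume f: "f \<in> PS n"
  show "hasse_deriv i k f \<in> PS n"
    unfolding PS_def
  proof (intro CollectI allI impI)
    fix c assume "hasse_deriv i k f c \<noteq> 0"
    then have "f (c + single i k) \<noteq> 0" by (auto simp: hasse_deriv_def)
    then show "keys c \<subseteq> {..<n}"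
      using f keys_subset_keys_add[of c] by (auto simp: PS_def)
  qed
qed

lemma hasse_subring_MPolys: "hasse_subring (MPolys n :: 'v::comm_ring_1 ser set)"
proof -
  have PS: "hasse_subring (PS n :: 'v ser set)" by (rule hasse_subring_PS)
  have "finite {a. ser_add f g a \<noteq> 0}" if "finite {a. f a \<noteq> 0}" "finite {a. g a \<noteq> 0}" for f g :: "'v ser"
  proof (rule finite_subset)
    show "{a. ser_add f g a \<noteq> 0} \<subseteq> {a. f a \<noteq> 0} \<union> {a. g a \<noteq> 0}"
      by (auto simp: ser_add_def)
  qed (use that in simp)
  moreover have "finite {a. ser_mult f g a \<noteq> 0}" if "finite {a. f a \<noteq> 0}" "finite {a. g a \<noteq> 0}" for f g :: "'v ser"
  proof (rule finite_subset)
    show "{a. ser_mult f g a \<noteq> 0} \<subseteq> (\<lambda>(b, c). b + c) ` ({a. f a \<noteq> 0} \<times> {a. g a \<noteq> 0})"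
    proof
      fix a assume "a \<in> {a. ser_mult f g a \<noteq> 0}"
      then obtain b c where "b + c = a" "f b \<noteq> 0" "g c \<noteq> 0"
        by (auto elim: ser_mult_nonzero_coeff)
      then show "a \<in> (\<lambda>(b, c). b + c) ` ({a. f a \<noteq> 0} \<times> {a. g a \<noteq> 0})"
        by auto
    qed
  qed (use that in simp)
  moreover have "finite {a. hasse_deriv i k f a \<noteq> 0}" if "finite {a. f a \<noteq> 0}" for i k and f :: "'v ser"
  proof (rule finite_subset)
    show "{c. hasse_deriv i k f c \<noteq> 0} \<subseteq> (\<lambda>c. c + single i k) -` {a. f a \<noteq> 0}"
      by (auto simp: hasse_deriv_def)
    show "finite ((\<lambda>c. c + single i k) -` {a. f a \<noteq> 0})"
      using that by (rule finite_vimageI) (simp add: inj_def)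
  qed
  moreover have "finite {a. ser_const c a \<noteq> 0}" for c :: 'v
    by (rule finite_subset[of _ "{0}"]) (auto simp: ser_const_def)
  ultimately show ?thesis
    using PS unfolding hasse_subring_def MPolys_def by blast
qed

context
  fixes R :: "'v::comm_ring_1 ser set"
  assumes R: "hasse_subring R"
begin

lemma hasse_subring_const: "ser_const c \<in> R"
  using R by (simp add: hasse_subring_def)

lemma hasse_subring_zero: "ser_zero \<in> R"
  by (simp add: ser_zero_eq_const hasse_subring_const)

lemma hasse_subring_add: "f \<in> R \<Longrightarrow> g \<in> R \<Longrightarrow> ser_add f g \<in> R"
  using R by (simp add: hasse_subring_def)

lemma hasse_subring_mult: "f \<in> R \<Longrightarrow> g \<in> R \<Longrightarrow> ser_mult f g \<in> R"
  using R by (simp add: hasse_subring_def)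

lemma hasse_subring_smult: "f \<in> R \<Longrightarrow> ser_smult c f \<in> R"
  using hasse_subring_mult[OF hasse_subring_const] by (simp add: ser_mult_const_left)

lemma hasse_subring_diff: "f \<in> R \<Longrightarrow> g \<in> R \<Longrightarrow> (\<lambda>a. f a - g a) \<in> R"
  using hasse_subring_add[of f "ser_smult (-1) g"] hasse_subring_smult[of g "-1"]
  by (simp add: ser_add_def ser_smult_def)

lemma hasse_subring_hasse_deriv: "f \<in> R \<Longrightarrow> hasse_deriv i k f \<in> R"
  using R by (simp add: hasse_subring_def)

end

section \<open>Differential operators\<close>

lemma mult_op_mem [simp]: "f \<in> R \<Longrightarrow> mult_op R s f = ser_mult s f"
  by (simp add: mult_op_def)

lemma mult_op_nonmem [simp]: "f \<notin> R \<Longrightarrow> mult_op R s f = ser_zero"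
  by (simp add: mult_op_def)

lemma commutator_mem [simp]:
  "f \<in> R \<Longrightarrow> commutator R d r f = (\<lambda>a. d (ser_mult r f) a - ser_mult r (d f) a)"
  by (simp add: commutator_def)

lemma commutator_nonmem [simp]: "f \<notin> R \<Longrightarrow> commutator R d r f = ser_zero"
  by (simp add: commutator_def)

definition op_add :: "('v::plus ser \<Rightarrow> 'v ser) \<Rightarrow> ('v ser \<Rightarrow> 'v ser) \<Rightarrow> 'v ser \<Rightarrow> 'v ser" where
  "op_add d d' = (\<lambda>f. ser_add (d f) (d' f))"

definition op_sum :: "'j set \<Rightarrow> ('j \<Rightarrow> 'v::comm_monoid_add ser \<Rightarrow> 'v ser) \<Rightarrow> 'v ser \<Rightarrow> 'v ser" where
  "op_sum S F = (\<lambda>f a. \<Sum>j\<in>S. F j f a)"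

definition hasse_op :: "'v::comm_ring_1 ser set \<Rightarrow> nat \<Rightarrow> nat \<Rightarrow> 'v ser \<Rightarrow> 'v ser" where
  "hasse_op R i k = (\<lambda>f. if f \<in> R then hasse_deriv i k f else ser_zero)"

lemma hasse_op_mem [simp]: "f \<in> R \<Longrightarrow> hasse_op R i k f = hasse_deriv i k f"
  by (simp add: hasse_op_def)

lemma hasse_op_nonmem [simp]: "f \<notin> R \<Longrightarrow> hasse_op R i k f = ser_zero"
  by (simp add: hasse_op_def)

lemma mult_op_ser_zero: "mult_op R ser_zero = (\<lambda>f. ser_zero)"
  by (rule ext) (simp add: mult_op_def)

lemma op_sum_empty: "op_sum {} F = (\<lambda>f. ser_zero)"
  by (simp add: op_sum_def fun_eq_iff)

lemma op_sum_insert: "finite S \<Longrightarrow> x \<notin> S \<Longrightarrow> op_sum (insert x S) F = op_add (F x) (op_sum S F)"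
  by (simp add: op_sum_def op_add_def ser_add_def)

lemma op_add_mult_op: "op_add (mult_op R s) (mult_op R s') = mult_op R (ser_add s s')"
proof (rule ext)
  fix f
  show "op_add (mult_op R s) (mult_op R s') f = mult_op R (ser_add s s') f"
    by (cases "f \<in> R") (simp_all add: op_add_def ser_mult_add_left)
qed

lemma commutator_op_add:
  "commutator R (op_add d d') r = op_add (commutator R d r) (commutator R d' r)"
proof (rule ext)
  fix f
  show "commutator R (op_add d d') r f = op_add (commutator R d r) (commutator R d' r) f"
    by (cases "f \<in> R") (simp_all add: op_add_def ser_mult_add_right, simp add: ser_add_def fun_eq_iff)
qed

lemma hasse_op_0: "hasse_op R i 0 = mult_op R (ser_const 1)"
proof (rule ext)
  fix f
  show "hasse_op R i 0 f = mult_op R (ser_const 1) f"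
    by (cases "f \<in> R") (simp_all add: ser_mult_const_left)
qed

lemma diffops_DiffOps: "d \<in> diffops R m \<Longrightarrow> d \<in> DiffOps R"
  by (auto simp: DiffOps_def)

lemma mult_op_DiffOps: "s \<in> R \<Longrightarrow> mult_op R s \<in> DiffOps R"
  by (rule diffops_DiffOps[where m = 0]) auto

context
  fixes R :: "'v::comm_ring_1 ser set"
  assumes R: "hasse_subring R"
begin

lemma V_linear_mult_op: "s \<in> R \<Longrightarrow> V_linear R (mult_op R s)"
  unfolding V_linear_def
  by (auto simp: hasse_subring_mult[OF R] hasse_subring_add[OF R] hasse_subring_smult[OF R] ser_mult_add_right ser_mult_smult_right)

lemma commutator_mult_op: "s \<in> R \<Longrightarrow> r \<in> R \<Longrightarrow> commutator R (mult_op R s) r = mult_op R ser_zero"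
proof (rule ext)
  fix f assume "s \<in> R" "r \<in> R"
  show "commutator R (mult_op R s) r f = mult_op R ser_zero f"
    using \<open>r \<in> R\<close> by (cases "f \<in> R") (simp_all add: hasse_subring_mult[OF R] ser_mult_left_commute fun_eq_iff)
qed

lemma diffops_Suc: "d \<in> diffops R m \<Longrightarrow> d \<in> diffops R (Suc m)"
proof (induction m arbitrary: d)
  case 0
  then obtain s where "s \<in> R" "d = mult_op R s" by auto
  then show ?case
    using commutator_mult_op V_linear_mult_op hasse_subring_zero[OF R] by auto
qed auto

lemma diffops_mono:
  assumes "m \<le> m'" "d \<in> diffops R m"
  shows "d \<in> diffops R m'"
  using assms(1) by (induction m' rule: dec_induct) (use assms(2) diffops_Suc in blast)+

lemma V_linear_op_add: "V_linear R d \<Longrightarrow> V_linear R d' \<Longrightarrow> V_linear R (op_add d d')"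
  unfolding V_linear_def op_add_def
  by (auto simp: hasse_subring_add[OF R] image_subset_iff) (simp_all add: ser_add_def ser_smult_def add_ac distrib_left)

lemma op_add_diffops: "d \<in> diffops R m \<Longrightarrow> d' \<in> diffops R m \<Longrightarrow> op_add d d' \<in> diffops R m"
proof (induction m arbitrary: d d')
  case 0
  then show ?case by (auto simp: op_add_mult_op hasse_subring_add[OF R])
next
  case (Suc m)
  then show ?case
    by (auto simp: V_linear_op_add commutator_op_add)
qed

lemma op_sum_diffops: "finite S \<Longrightarrow> (\<And>j. j \<in> S \<Longrightarrow> F j \<in> diffops R m) \<Longrightarrow> op_sum S F \<in> diffops R m"
proof (induction S rule: finite_induct)
  case empty
  have "mult_op R ser_zero \<in> diffops R m"
    using diffops_mono[of 0 m] hasse_subring_zero[OF R] by auto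
  then show ?case unfolding op_sum_empty mult_op_ser_zero .
next
  case (insert x S)
  then show ?case by (simp add: op_sum_insert op_add_diffops)
qed

lemma mult_op_comp_mult_op: "r \<in> R \<Longrightarrow> mult_op R s \<circ> mult_op R r = mult_op R (ser_mult s r)"
proof (rule ext)
  fix f assume "r \<in> R"
  show "(mult_op R s \<circ> mult_op R r) f = mult_op R (ser_mult s r) f"
    using \<open>r \<in> R\<close> by (cases "f \<in> R") (simp_all add: hasse_subring_mult[OF R] hasse_subring_zero[OF R] ser_mult_assoc)
qed

lemma V_linear_mult_op_comp: "s \<in> R \<Longrightarrow> V_linear R d \<Longrightarrow> V_linear R (mult_op R s \<circ> d)"
  unfolding V_linear_def
  by (auto simp: hasse_subring_mult[OF R] hasse_subring_add[OF R] hasse_subring_smult[OF R] hasse_subring_zero[OF R] image_subset_iff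
      ser_mult_add_right ser_mult_smult_right)

lemma commutator_mult_op_comp:
  assumes "r \<in> R" "V_linear R d"
  shows "commutator R (mult_op R s \<circ> d) r = mult_op R s \<circ> commutator R d r"
proof (rule ext)
  fix f
  show "commutator R (mult_op R s \<circ> d) r f = (mult_op R s \<circ> commutator R d r) f"
  proof (cases "f \<in> R")
    case True
    then have "d (ser_mult r f) \<in> R" "d f \<in> R"
      using assms by (auto simp: V_linear_def hasse_subring_mult[OF R])
    then show ?thesis
      using True assms(1)
      by (simp add: hasse_subring_mult[OF R] hasse_subring_diff[OF R] ser_mult_diff_right ser_mult_left_commute)
  qed (simp add: hasse_subring_zero[OF R])
qed

lemma mult_op_comp_diffops: "s \<in> R \<Longrightarrow> d \<in> diffops R m \<Longrightarrow> mult_op R s \<circ> d \<in> diffops R m"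
proof (induction m arbitrary: d)
  case 0
  then obtain r where "r \<in> R" "d = mult_op R r" by auto
  then have "mult_op R s \<circ> d = mult_op R (ser_mult s r)"
    by (simp add: mult_op_comp_mult_op)
  then show ?case
    using \<open>r \<in> R\<close> \<open>s \<in> R\<close> hasse_subring_mult[OF R] by auto
next
  case (Suc m)
  have d: "V_linear R d" "\<And>r. r \<in> R \<Longrightarrow> commutator R d r \<in> diffops R m"
    using Suc.prems(2) by auto
  show ?case
    unfolding diffops.simps mem_Collect_eq
  proof (intro conjI ballI)
    show "V_linear R (mult_op R s \<circ> d)"
      using Suc.prems(1) d(1) by (rule V_linear_mult_op_comp)
    fix r assume "r \<in> R"
    show "commutator R (mult_op R s \<circ> d) r \<in> diffops R m"
      unfolding commutator_mult_op_comp[OF \<open>r \<in> R\<close> d(1)]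
      using Suc.prems(1) d(2)[OF \<open>r \<in> R\<close>] by (rule Suc.IH)
  qed
qed

lemma V_linear_hasse_op: "V_linear R (hasse_op R i k)"
  unfolding V_linear_def
  by (auto simp: hasse_subring_hasse_deriv[OF R] hasse_subring_add[OF R] hasse_subring_smult[OF R] hasse_deriv_add hasse_deriv_smult)

lemma op_sum_leibniz_apply:
  assumes "r \<in> R" "f \<in> R"
  shows "op_sum S (\<lambda>j. mult_op R (hasse_deriv i j r) \<circ> hasse_op R i (k - j)) f
       = (\<lambda>a. \<Sum>j\<in>S. ser_mult (hasse_deriv i j r) (hasse_deriv i (k - j) f) a)"
  using assms by (simp add: op_sum_def hasse_subring_hasse_deriv[OF R])

lemma op_sum_leibniz_nonmem:
  assumes "f \<notin> R"
  shows "op_sum S (\<lambda>j. mult_op R (hasse_deriv i j r) \<circ> hasse_op R i (k - j)) f = ser_zero"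
  using assms by (simp add: op_sum_def hasse_subring_zero[OF R] fun_eq_iff)

lemma hasse_op_comp_mult_op:
  assumes "r \<in> R"
  shows "hasse_op R i k \<circ> mult_op R r = op_sum {..k} (\<lambda>j. mult_op R (hasse_deriv i j r) \<circ> hasse_op R i (k - j))"
proof (rule ext)
  fix f
  show "(hasse_op R i k \<circ> mult_op R r) f = op_sum {..k} (\<lambda>j. mult_op R (hasse_deriv i j r) \<circ> hasse_op R i (k - j)) f"
    using assms
    by (cases "f \<in> R") (simp_all add: op_sum_leibniz_apply op_sum_leibniz_nonmem hasse_subring_mult[OF R]
        hasse_subring_zero[OF R] hasse_deriv_ser_mult fun_eq_iff)
qed

text \<open>The \<open>j = 0\<close> term of the Leibniz rule is \<open>r * D_i^(k)\<close>, which the commutator removes.\<close>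

lemma commutator_hasse_op:
  assumes "r \<in> R"
  shows "commutator R (hasse_op R i k) r = op_sum {1..k} (\<lambda>j. mult_op R (hasse_deriv i j r) \<circ> hasse_op R i (k - j))"
proof (rule ext)
  fix f
  have "{..k} = insert 0 {1..k}" by auto
  then show "commutator R (hasse_op R i k) r f = op_sum {1..k} (\<lambda>j. mult_op R (hasse_deriv i j r) \<circ> hasse_op R i (k - j)) f"
    using assms
    by (cases "f \<in> R") (simp_all add: op_sum_leibniz_apply op_sum_leibniz_nonmem hasse_subring_mult[OF R]
        hasse_deriv_ser_mult fun_eq_iff)
qed

lemma hasse_op_diffops: "hasse_op R i k \<in> diffops R k"
proof (induction k rule: less_induct)
  case (less k)
  show ?case
  proof (cases k)
    case 0
    then show ?thesis by (auto simp: hasse_op_0 hasse_subring_const[OF R])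
  next
    case (Suc m)
    have "mult_op R (hasse_deriv i j r) \<circ> hasse_op R i (k - j) \<in> diffops R m"
      if "r \<in> R" "j \<in> {1..k}" for r j
      using less[of "k - j"] diffops_mono[of "k - j" m] mult_op_comp_diffops hasse_subring_hasse_deriv[OF R] that Suc
      by auto
    then have "commutator R (hasse_op R i k) r \<in> diffops R m" if "r \<in> R" for r
      unfolding commutator_hasse_op[OF that] using that by (intro op_sum_diffops) auto
    then show ?thesis
      using Suc V_linear_hasse_op by simp
  qed
qed

lemma hasse_op_DiffOps: "hasse_op R i k \<in> DiffOps R"
  using hasse_op_diffops by (rule diffops_DiffOps)
end

section \<open>The annihilator\<close>

context
  fixes R :: "'v::comm_ring_1 ser set" and act :: "('v ser \<Rightarrow> 'v ser) \<Rightarrow> 'm::ab_group_add \<Rightarrow> 'm"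
  assumes R: "hasse_subring R" and M: "D_module R act"
begin

lemma act_add: "d \<in> DiffOps R \<Longrightarrow> act d (x + y) = act d x + act d y"
  using M by (simp add: D_module_def)

lemma act_op_add: "d \<in> DiffOps R \<Longrightarrow> d' \<in> DiffOps R \<Longrightarrow> act (op_add d d') x = act d x + act d' x"
  using M by (simp add: D_module_def op_add_def)

lemma act_comp: "d \<in> DiffOps R \<Longrightarrow> d' \<in> DiffOps R \<Longrightarrow> act (d \<circ> d') x = act d (act d' x)"
  using M by (simp add: D_module_def)

lemma act_one: "act (mult_op R (ser_const 1)) x = x"
  using M by (simp add: D_module_def)

lemma act_0: "d \<in> DiffOps R \<Longrightarrow> act d 0 = 0"
  using act_add[of d 0 0] by simp

lemma act_mult_op_ser_zero: "act (mult_op R ser_zero) x = 0"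
proof -
  have "mult_op R ser_zero \<in> DiffOps R"
    using hasse_subring_zero[OF R] by (rule mult_op_DiffOps)
  moreover have "op_add (mult_op R ser_zero) (mult_op R ser_zero) = mult_op R ser_zero"
    by (simp add: op_add_mult_op)
  ultimately have "act (mult_op R ser_zero) x = act (mult_op R ser_zero) x + act (mult_op R ser_zero) x"
    using act_op_add by metis
  then show ?thesis by simp
qed

lemma act_op_sum:
  "finite S \<Longrightarrow> (\<And>j. j \<in> S \<Longrightarrow> F j \<in> diffops R m) \<Longrightarrow> act (op_sum S F) x = (\<Sum>j\<in>S. act (F j) x)"
proof (induction S rule: finite_induct)
  case empty
  show ?case
    using act_mult_op_ser_zero[of x] unfolding op_sum_empty mult_op_ser_zero sum.empty .
next
  case (insert y S)
  have "F y \<in> DiffOps R"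
    using insert.prems by (intro diffops_DiffOps[where m = m]) simp
  moreover have "op_sum S F \<in> DiffOps R"
    using insert.prems insert.hyps by (intro diffops_DiffOps[where m = m] op_sum_diffops[OF R]) auto
  ultimately show ?case
    using insert
    by (simp add: op_sum_insert act_op_add)
qed

lemma ser_zero_mem_Ann: "ser_zero \<in> Ann_R R act"
  by (simp add: Ann_R_def hasse_subring_zero[OF R] act_mult_op_ser_zero)

lemma ser_add_mem_Ann: "r \<in> Ann_R R act \<Longrightarrow> s \<in> Ann_R R act \<Longrightarrow> ser_add r s \<in> Ann_R R act"
  using act_op_add[OF mult_op_DiffOps mult_op_DiffOps]
  by (auto simp: Ann_R_def hasse_subring_add[OF R] simp flip: op_add_mult_op)

lemma ser_mult_mem_Ann: "t \<in> R \<Longrightarrow> r \<in> Ann_R R act \<Longrightarrow> ser_mult t r \<in> Ann_R R act"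
  using act_comp[OF mult_op_DiffOps mult_op_DiffOps] act_0[OF mult_op_DiffOps]
  by (auto simp: Ann_R_def hasse_subring_mult[OF R] simp flip: mult_op_comp_mult_op[OF R])

lemma ser_smult_mem_Ann: "f \<in> R \<Longrightarrow> ser_const c \<in> Ann_R R act \<Longrightarrow> ser_smult c f \<in> Ann_R R act"
  using ser_mult_mem_Ann by (metis ser_mult_const_right)

lemma ser_const_mult_mem_Ann: "ser_const c \<in> Ann_R R act \<Longrightarrow> ser_const (d * c) \<in> Ann_R R act"
  using ser_smult_mem_Ann[OF hasse_subring_const[OF R], of c d] by (simp add: ser_smult_const mult.commute)

lemma ser_const_1_not_mem_Ann:
  assumes "(x :: 'm) \<noteq> 0"
  shows "ser_const 1 \<notin> Ann_R R act"
proof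
  assume "ser_const 1 \<in> Ann_R R act"
  then have "act (mult_op R (ser_const 1)) x = 0" by (simp add: Ann_R_def)
  with assms show False by (simp add: act_one)
qed

lemma act_hasse_op_mult_op:
  assumes "r \<in> R"
  shows "act (hasse_op R i k) (act (mult_op R r) x)
       = (\<Sum>j\<le>k. act (mult_op R (hasse_deriv i j r)) (act (hasse_op R i (k - j)) x))"
proof -
  have terms: "mult_op R (hasse_deriv i j r) \<circ> hasse_op R i (k - j) \<in> diffops R k" if "j \<le> k" for j
    using mult_op_comp_diffops[OF R] hasse_subring_hasse_deriv[OF R assms]
      diffops_mono[OF R _ hasse_op_diffops[OF R]] that by auto
  have "act (hasse_op R i k \<circ> mult_op R r) x
      = (\<Sum>j\<le>k. act (mult_op R (hasse_deriv i j r) \<circ> hasse_op R i (k - j)) x)"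
    unfolding hasse_op_comp_mult_op[OF R assms] by (rule act_op_sum) (use terms in auto)
  then show ?thesis
    using assms by (simp add: act_comp mult_op_DiffOps hasse_op_DiffOps[OF R] hasse_subring_hasse_deriv[OF R])
qed

text \<open>By induction on \<open>k\<close>: in \<open>D_i^(k) r = (\<Sum>j\<le>k. D_i^(j)(r) D_i^(k-j))\<close> the left side
  and all terms with \<open>j < k\<close> kill \<open>M\<close>.\<close>

lemma hasse_deriv_mem_Ann: "r \<in> Ann_R R act \<Longrightarrow> hasse_deriv i k r \<in> Ann_R R act"
proof (induction k rule: less_induct)
  case (less k)
  then have r: "r \<in> R" "\<And>x. act (mult_op R r) x = 0"
    by (auto simp: Ann_R_def)
  have "act (mult_op R (hasse_deriv i k r)) x = 0" for x
  proof -
    have "0 = (\<Sum>j\<le>k. act (mult_op R (hasse_deriv i j r)) (act (hasse_op R i (k - j)) x))"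
      using act_hasse_op_mult_op[OF r(1), of i k x] by (simp add: r(2) act_0 hasse_op_DiffOps[OF R])
    also have "\<dots> = act (mult_op R (hasse_deriv i k r)) (act (hasse_op R i 0) x)"
      using less.IH less.prems by (simp add: lessThan_Suc_atMost[symmetric] Ann_R_def)
    finally show ?thesis
      by (simp add: hasse_op_0 act_one)
  qed
  then show ?case
    by (simp add: Ann_R_def hasse_subring_hasse_deriv[OF R r(1)])
qed

text \<open>\<open>h\<close> is the Hasse derivative \<open>D^(a)\<close>, built one variable at a time.\<close>

lemma hasse_shift_mem_Ann:
  assumes "f \<in> Ann_R R act"
  shows "\<exists>h\<in>Ann_R R act. h 0 = f a \<and> (\<forall>b. f (b + a) dvd h b)"
  using assms
proof (induction "card (keys a)" arbitrary: a f)
  case 0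
  then show ?case by auto
next
  case (Suc N)
  then obtain i where i: "i \<in> keys a" by (metis card.empty all_not_in_conv nat.distinct(1))
  define a' where "a' = a - single i (lookup a i)"
  define g where "g = hasse_deriv i (lookup a i) f"
  have "card (keys a') = N"
    using Suc.hyps(2) i by (simp add: a'_def keys_minus_single_lookup)
  moreover have "g \<in> Ann_R R act"
    unfolding g_def using Suc.prems by (rule hasse_deriv_mem_Ann)
  ultimately obtain h where h: "h \<in> Ann_R R act" "h 0 = g a'" "\<And>b. g (b + a') dvd h b"
    using Suc.hyps(1) by blast
  have "a' + single i (lookup a i) = a"
    by (simp add: a'_def minus_single_add_single)
  then have "g (b + a') = of_nat ((lookup (b + a') i + lookup a i) choose lookup a i) * f (b + a)" for b
    by (simp add: g_def hasse_deriv_def add.assoc)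
  then have "f (b + a) dvd g (b + a')" for b
    by simp
  then have "f (b + a) dvd h b" for b
    using h(3) by (rule dvd_trans)
  moreover have "h 0 = f a"
    using h(2) by (simp add: g_def a'_def hasse_deriv_at_monomial)
  ultimately show ?case
    using h(1) by blast
qed

lemma top_coeff_mem_Ann:
  assumes "f \<in> Ann_R R act" and top: "\<And>b. f b \<noteq> 0 \<Longrightarrow> total_degree b \<le> total_degree a"
  shows "ser_const (f a) \<in> Ann_R R act"
proof -
  obtain h where h: "h \<in> Ann_R R act" "h 0 = f a" "\<And>b. f (b + a) dvd h b"
    using hasse_shift_mem_Ann[OF assms(1)] by blast
  have "h b = 0" if "b \<noteq> 0" for b
  proof -
    have "total_degree a < total_degree (b + a)"
      using that total_degree_eq_0_iff[of b] by (simp add: total_degree_add)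
    then have "f (b + a) = 0"
      using top by fastforce
    then show ?thesis
      using h(3)[of b] by simp
  qed
  then have "h = ser_const (f a)"
    using h(2) by (auto simp: ser_const_def)
  with h(1) show ?thesis by simp
qed

lemma remove_coeff_mem_Ann:
  assumes "f \<in> Ann_R R act" "ser_const (f a) \<in> Ann_R R act" "(\<lambda>b. if b = a then 1 else 0) \<in> R"
  shows "(\<lambda>b. if b = a then 0 else f b) \<in> Ann_R R act"
proof -
  have "ser_mult (\<lambda>b. if b = a then 1 else 0) (ser_const (- f a)) \<in> Ann_R R act"
    using ser_mult_mem_Ann[OF assms(3)] ser_const_mult_mem_Ann[OF assms(2), of "-1"] by simp
  then have "ser_add f (ser_mult (\<lambda>b. if b = a then 1 else 0) (ser_const (- f a))) \<in> Ann_R R act"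
    by (rule ser_add_mem_Ann[OF assms(1)])
  moreover have "ser_add f (ser_mult (\<lambda>b. if b = a then 1 else 0) (ser_const (- f a)))
      = (\<lambda>b. if b = a then 0 else f b)"
    by (auto simp: ser_mult_const_right ser_smult_def ser_add_def)
  ultimately show ?thesis by simp
qed

end

section \<open>Constants in the annihilator\<close>

lemma const_coeff_mem_Ann_MPolys:
  assumes M: "D_module (MPolys n) act" and "f \<in> Ann_R (MPolys n) act"
  shows "ser_const (f b) \<in> Ann_R (MPolys n) act"
  using assms(2)
proof (induction "card {a. f a \<noteq> 0}" arbitrary: f rule: less_induct)
  case less
  note R = hasse_subring_MPolys
  let ?S = "{a. f a \<noteq> 0}"
  have f: "f \<in> PS n" "finite ?S"
    using less.prems by (simp_all add: Ann_R_def MPolys_def)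
  show ?case
  proof (cases "?S = {}")
    case True
    then show ?thesis
      using ser_zero_mem_Ann[OF R M] by (simp add: ser_zero_eq_const)
  next
    case False
    have "Max (total_degree ` ?S) \<in> total_degree ` ?S"
      using f(2) False by simp
    then obtain a where a: "a \<in> ?S" "total_degree a = Max (total_degree ` ?S)"
      by auto
    then have top: "ser_const (f a) \<in> Ann_R (MPolys n) act"
      using f(2) by (intro top_coeff_mem_Ann[OF R M less.prems]) simp
    have "keys a \<subseteq> {..<n}"
      using a(1) f(1) by (simp add: PS_def)
    then have "(\<lambda>b. if b = a then 1 else 0) \<in> MPolys n"
      by (auto simp: MPolys_def PS_def intro: finite_subset[of _ "{a}"])
    then have f': "(\<lambda>b. if b = a then 0 else f b) \<in> Ann_R (MPolys n) act"
      using remove_coeff_mem_Ann[OF R M less.prems top] by blast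
    have "{c. (if c = a then 0 else f c) \<noteq> 0} = ?S - {a}"
      by auto
    then have "card {c. (if c = a then 0 else f c) \<noteq> 0} < card ?S"
      using card_Diff1_less[OF f(2) a(1)] by simp
    then have "ser_const ((\<lambda>b. if b = a then 0 else f b) b) \<in> Ann_R (MPolys n) act"
      by (rule less.hyps[OF _ f'])
    then show ?thesis
      using top by (cases "b = a") simp_all
  qed
qed

lemma dvr_exists_min_valuation:
  fixes \<pi> :: "'v::idom"
  assumes dvr: "\<forall>x. x \<noteq> 0 \<longrightarrow> (\<exists>u k. u dvd 1 \<and> x = u * \<pi> ^ k)" and "x \<in> X" "x \<noteq> 0"
  obtains y k where "y \<in> X" "y dvd \<pi> ^ k" "\<And>z. z \<in> X \<Longrightarrow> \<pi> ^ k dvd z"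
proof -
  define K where "K = {k. \<exists>y\<in>X. \<exists>u. u dvd 1 \<and> y = u * \<pi> ^ k}"
  obtain u k where "u dvd 1" "x = u * \<pi> ^ k"
    using dvr assms(3) by blast
  then have "k \<in> K"
    using assms(2) by (auto simp: K_def)
  define k0 where "k0 = (LEAST k. k \<in> K)"
  have "k0 \<in> K"
    unfolding k0_def using \<open>k \<in> K\<close> by (rule LeastI)
  then obtain y u0 where y: "y \<in> X" "u0 dvd 1" "y = u0 * \<pi> ^ k0"
    by (auto simp: K_def)
  obtain w where "1 = u0 * w"
    using y(2) by (rule dvdE)
  then have "\<pi> ^ k0 = w * y"
    using y(3) by (metis mult.assoc mult.commute mult_1)
  then have "y dvd \<pi> ^ k0" by simp
  moreover have "\<pi> ^ k0 dvd z" if "z \<in> X" for z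
  proof (cases "z = 0")
    case False
    then obtain v k' where "v dvd 1" "z = v * \<pi> ^ k'"
      using dvr by blast
    moreover from this have "k0 \<le> k'"
      using that unfolding k0_def by (intro Least_le) (auto simp: K_def)
    ultimately show ?thesis
      by (simp add: le_imp_power_dvd dvd_mult)
  qed simp
  ultimately show ?thesis
    using that y(1) by blast
qed

lemma dvr_ideal_eq_multiples:
  fixes \<pi> :: "'v::idom"
  assumes dvr: "\<forall>x. x \<noteq> 0 \<longrightarrow> (\<exists>u k. u dvd 1 \<and> x = u * \<pi> ^ k)"
    and ideal: "\<And>c d. c \<in> I \<Longrightarrow> d * c \<in> I" and "1 \<notin> I" "c \<in> I" "c \<noteq> 0"
  obtains l where "l \<ge> 1" "I = {c. \<pi> ^ l dvd c}"
proof -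
  obtain y l where y: "y \<in> I" "y dvd \<pi> ^ l" "\<And>z. z \<in> I \<Longrightarrow> \<pi> ^ l dvd z"
    using dvr_exists_min_valuation[OF dvr \<open>c \<in> I\<close> \<open>c \<noteq> 0\<close>] by blast
  obtain e where "\<pi> ^ l = y * e"
    using y(2) by (rule dvdE)
  then have "\<pi> ^ l \<in> I"
    using ideal[OF y(1), of e] by (simp add: mult.commute)
  have "I = {c. \<pi> ^ l dvd c}"
  proof (intro equalityI subsetI)
    fix c assume "c \<in> {c. \<pi> ^ l dvd c}"
    then obtain e where "c = \<pi> ^ l * e" by (auto elim: dvdE)
    then show "c \<in> I"
      using ideal[OF \<open>\<pi> ^ l \<in> I\<close>, of e] by (simp add: mult.commute)
  qed (use y(3) in blast)
  moreover have "l \<noteq> 0"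
    using \<open>\<pi> ^ l \<in> I\<close> \<open>1 \<notin> I\<close> by (cases l) auto
  ultimately show ?thesis
    using that[of l] by simp
qed

lemma dvd_coeffs_imp_ser_smult:
  fixes d :: "'v::idom"
  assumes R: "R = PS n \<or> R = MPolys n" and "f \<in> R" "d \<noteq> 0" "\<And>b. d dvd f b"
  obtains q where "q \<in> R" "f = ser_smult d q"
proof -
  define q where "q = (\<lambda>b. SOME q. f b = d * q)"
  have f_eq: "f b = d * q b" for b
    unfolding q_def by (rule someI_ex) (use assms(4)[of b] in auto)
  then have supp: "{b. q b \<noteq> 0} \<subseteq> {b. f b \<noteq> 0}"
    using assms(3) by auto
  have "q \<in> PS n"
    using R assms(2) supp by (auto simp: PS_def MPolys_def)
  moreover have "finite {b. q b \<noteq> 0}" if "R = MPolys n"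
    using assms(2) that finite_subset[OF supp] by (simp add: MPolys_def)
  ultimately have "q \<in> R"
    using R by (auto simp: MPolys_def)
  moreover have "f = ser_smult d q"
    by (simp add: fun_eq_iff f_eq ser_smult_def)
  ultimately show ?thesis
    using that by blast
qed

text \<open>Take a coefficient \<open>f a\<close> of minimal valuation: then \<open>D^(a) f = f a * q\<close> with \<open>q 0 = 1\<close>,
  and \<open>q\<close> is a unit of \<open>R\<close>.\<close>

lemma const_coeff_mem_Ann_PS:
  fixes \<pi> :: "'v::idom" and f :: "'v ser"
  assumes dvr: "\<forall>x. x \<noteq> 0 \<longrightarrow> (\<exists>u k. u dvd 1 \<and> x = u * \<pi> ^ k)"
    and M: "D_module (PS n) act" and f: "f \<in> Ann_R (PS n) act"
  shows "ser_const (f b) \<in> Ann_R (PS n) act"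
proof (cases "f b = 0")
  case True
  then show ?thesis
    using ser_zero_mem_Ann[OF hasse_subring_PS M] by (simp add: ser_zero_eq_const)
next
  case False
  note R = hasse_subring_PS
  obtain y k where y: "y \<in> range f" "y dvd \<pi> ^ k" "\<And>z. z \<in> range f \<Longrightarrow> \<pi> ^ k dvd z"
    using dvr_exists_min_valuation[OF dvr, of "f b" "range f"] False by blast
  then obtain a where "y = f a" by blast
  then have a: "f a dvd f c" for c
    using dvd_trans[OF y(2) y(3)[of "f c"]] by simp
  then have "f a \<noteq> 0"
    using False by (metis dvd_0_left)
  obtain h where h: "h \<in> Ann_R (PS n) act" "h 0 = f a" "\<And>c. f (c + a) dvd h c"
    using hasse_shift_mem_Ann[OF R M f] by blast
  obtain q where q: "q \<in> PS n" "h = ser_smult (f a) q"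
  proof (rule dvd_coeffs_imp_ser_smult[of "PS n" n h "f a"])
    show "h \<in> PS n" using h(1) by (simp add: Ann_R_def)
    show "f a dvd h c" for c using a h(3) by (blast intro: dvd_trans)
  qed (use \<open>f a \<noteq> 0\<close> in simp_all)
  have "q 0 = 1"
    using h(2) \<open>f a \<noteq> 0\<close> by (simp add: q(2) ser_smult_def)
  then have "ser_mult (ser_inverse q) h = ser_const (f a)"
    by (simp add: q(2) ser_mult_smult_right ser_mult_commute[of "ser_inverse q"] ser_mult_ser_inverse
        ser_smult_const)
  then have "ser_const (f a) \<in> Ann_R (PS n) act"
    using ser_mult_mem_Ann[OF R M ser_inverse_PS[OF q(1)] h(1)] by simp
  then have "ser_const (e * f a) \<in> Ann_R (PS n) act" for e
    by (rule ser_const_mult_mem_Ann[OF R M])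
  moreover obtain e where "f b = f a * e"
    using a[of b] by (rule dvdE)
  ultimately show ?thesis
    by (metis mult.commute)
qed

lemma Ann_R_eq_ser_smult:
  fixes d :: "'v::idom"
  assumes R: "R = PS n \<or> R = MPolys n" and M: "D_module R act"
    and coeff: "\<And>f b. f \<in> Ann_R R act \<Longrightarrow> ser_const (f b) \<in> Ann_R R act"
    and I: "{c. ser_const c \<in> Ann_R R act} = {c. d dvd c}" and "d \<noteq> 0"
  shows "Ann_R R act = {ser_smult d f | f. f \<in> R}"
proof (intro equalityI subsetI)
  fix g assume g: "g \<in> Ann_R R act"
  have "d dvd g b" for b
    using coeff[OF g, of b] I by blast
  moreover have "g \<in> R"
    using g by (simp add: Ann_R_def)
  ultimately obtain q where "q \<in> R" "g = ser_smult d q"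
    using dvd_coeffs_imp_ser_smult[OF R _ \<open>d \<noteq> 0\<close>] by blast
  then show "g \<in> {ser_smult d f | f. f \<in> R}" by blast
next
  fix g assume "g \<in> {ser_smult d f | f. f \<in> R}"
  then obtain f where f: "f \<in> R" "g = ser_smult d f" by blast
  have "hasse_subring R"
    using R hasse_subring_PS hasse_subring_MPolys by blast
  moreover have "ser_const d \<in> Ann_R R act"
    using I by (simp add: set_eq_iff)
  ultimately show "g \<in> Ann_R R act"
    using ser_smult_mem_Ann[OF _ M f(1)] f(2) by blast
qed

theorem theorem3p1:
  fixes \<pi> :: "'v::idom" and n :: nat and R :: "'v ser set"
    and act :: "('v ser \<Rightarrow> 'v ser) \<Rightarrow> 'm::ab_group_add \<Rightarrow> 'm"
  assumes "mixed_char_DVR \<pi>"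
    and "R = PS n \<or> R = MPolys n"
    and "D_module R act"
    and "\<exists>x::'m. x \<noteq> 0"
  shows "Ann_R R act = {ser_zero}
       \<or> (\<exists>l::nat. l \<ge> 1 \<and> Ann_R R act = {ser_smult (\<pi> ^ l) f | f. f \<in> R})"
proof -
  have R: "hasse_subring R"
    using assms(2) hasse_subring_PS hasse_subring_MPolys by blast
  have dvr: "\<forall>x. x \<noteq> 0 \<longrightarrow> (\<exists>u k. u dvd 1 \<and> x = u * \<pi> ^ k)" and "\<pi> \<noteq> 0"
    using assms(1) by (auto simp: mixed_char_DVR_def)
  have coeff: "ser_const (f b) \<in> Ann_R R act" if "f \<in> Ann_R R act" for f b
    using assms(2) const_coeff_mem_Ann_PS[OF dvr] const_coeff_mem_Ann_MPolys assms(3) that by blast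
  show ?thesis
  proof (cases "\<exists>c. c \<noteq> 0 \<and> ser_const c \<in> Ann_R R act")
    case False
    then have "f = ser_zero" if "f \<in> Ann_R R act" for f
      using coeff[OF that] by (auto simp: fun_eq_iff)
    then show ?thesis
      using ser_zero_mem_Ann[OF R assms(3)] by blast
  next
    case True
    then obtain c where c: "c \<noteq> 0" "ser_const c \<in> Ann_R R act" by blast
    have "ser_const 1 \<notin> Ann_R R act"
      using assms(4) ser_const_1_not_mem_Ann[OF R assms(3)] by blast
    then obtain l where l: "l \<ge> 1" "{c. ser_const c \<in> Ann_R R act} = {c. \<pi> ^ l dvd c}"
      using dvr_ideal_eq_multiples[OF dvr _ _ _ c(1)] ser_const_mult_mem_Ann[OF R assms(3)] c(2)
      by (metis mem_Collect_eq)
    have "Ann_R R act = {ser_smult (\<pi> ^ l) f | f. f \<in> R}"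
      by (rule Ann_R_eq_ser_smult[OF assms(2,3)]) (use coeff l(2) \<open>\<pi> \<noteq> 0\<close> in auto)
    then show ?thesis
      using l(1) by blast
  qed
qed

end
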